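(* Let $X$ be a random variable with CDF $F$ and mean $\mu=\mathbb{E}X$, and let $1\le j\le m$ be integers. Each of the following conditions implies $\mathbb{E}X_{j:m}\leq\mu$: 1. $F$ is in the DD class (i.e. $F^{-1}$ is convex on $(0,1)$) and $\frac12\geq\frac{j}{m+1}$; 2. $F$ is DLOR (i.e. $F^{-1}\circ L$ is convex on $\mathbb{R}$, where $L(x)=\frac1{1+e^{-x}}$) and $\psi(j)-\psi(m-j+1)\leq 0$; 3. $F$ is DHR (i.e. $F^{-1}\circ\mathcal{E}$ is convex on $(0,\infty)$, where $\mathcal{E}(x)=1-e^{-x}$) and $1\geq\sum_{k=m-j+1}^{m}\frac1k$; 4. $F$ is DRHR (i.e. $F^{-1}\circ\mathcal{E}_-$ is convex on $(-\infty,0)$, where $\mathcal{E}_-(x)=e^{x}$ for $x\le 0$) and $1\leq\sum_{k=j}^{m}\frac1k$.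
   Context: $F^{-1}(p)=\inf\{x:F(x)\ge p\}$ is the quantile function. $X_{j:m}$ is the $j$-th order statistic of an i.i.d. sample of size $m$ from $F$. $\psi$ denotes the digamma function. DD: decreasing density (concave CDF); DLOR: decreasing log-odds rate (concave log-odds); DHR: decreasing hazard rate (concave $-\log(1-F)$); DRHR: decreasing reversed hazard rate ($\log F$ concave); the precise definitions used are those given in the claim in terms of the quantile function. *)

theory Defs
  imports "HOL-Probability.Probability"
begin

definition quantile :: "(real \<Rightarrow> real) \<Rightarrow> real \<Rightarrow> real" where
  "quantile F p = Inf {x. F x \<ge> p}"

definition order_stat :: "nat \<Rightarrow> nat \<Rightarrow> (nat \<Rightarrow> real) \<Rightarrow> real" where
  "order_stat m j x = sort (map x [0..<m]) ! (j - 1)"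

definition logistic :: "real \<Rightarrow> real" where
  "logistic x = 1 / (1 + exp (- x))"

end

theory Submission
  imports Defs "HOL-Real_Asymp.Real_Asymp"
begin

text \<open>
  Let \<open>Q\<close> be the quantile function of \<open>X\<close>. The \<open>j\<close>-th order statistic of \<open>m\<close> uniform
  variables has the Beta density \<open>b(u) = m C(m-1,j-1) u^(j-1) (1-u)^(m-j)\<close>, and applying \<open>Q\<close> to
  it gives a variable distributed as \<open>X_{j:m}\<close>; hence \<open>E X_{j:m} - E X = \<integral>\<^sub>0\<^sup>1 Q (b - 1)\<close>.
  Each class condition says that \<open>Q = G \<circ> T\<close> with \<open>G\<close> convex and \<open>T\<close> an increasing transform
  (\<open>u\<close>, \<open>logit u\<close>, \<open>-ln (1-u)\<close>, \<open>ln u\<close>). For \<open>1 < j < m\<close> the density \<open>b\<close> exceeds \<open>1\<close>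
  exactly on an interval \<open>[c1, c2]\<close>; the secant of \<open>G\<close> through \<open>T c1\<close> and \<open>T c2\<close> is a line
  \<open>\<alpha> + \<beta> T\<close> with \<open>\<beta> \<ge> 0\<close> and \<open>(Q - \<alpha> - \<beta> T) (b - 1) \<le> 0\<close>, so
  \<open>\<integral> Q (b - 1) \<le> \<beta> \<integral> T (b - 1)\<close>. The numerical conditions say precisely that
  \<open>\<integral> T b \<le> \<integral> T\<close>, these integrals being \<open>j/(m+1)\<close> and sums of reciprocals (differences of
  digamma values). For \<open>j = 1\<close> the density is decreasing and monotonicity of \<open>Q\<close> suffices;
  for \<open>j = m \<ge> 2\<close> none of the numerical conditions holds.
\<close>

section \<open>Beta densities and binomial tails\<close>

text \<open>\<open>order_stat_density m k\<close> is the Beta\<open>(k, m - k + 1)\<close> density of the \<open>k\<close>-th order statistic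
  of \<open>m\<close> independent uniform variables on \<open>(0, 1)\<close>. Its distribution function is
  \<open>binomial_tail m k p\<close>, the probability of at least \<open>k\<close> successes in \<open>m\<close> Bernoulli\<open>(p)\<close> trials.\<close>

definition order_stat_density :: "nat \<Rightarrow> nat \<Rightarrow> real \<Rightarrow> real" where
  "order_stat_density m k u = real m * real ((m - 1) choose (k - 1)) * u ^ (k - 1) * (1 - u) ^ (m - k)"

definition binomial_tail :: "nat \<Rightarrow> nat \<Rightarrow> real \<Rightarrow> real" where
  "binomial_tail m k p = (\<Sum>i = k..m. real (m choose i) * p ^ i * (1 - p) ^ (m - i))"

lemma order_stat_density_1_1 [simp]: "order_stat_density (Suc 0) (Suc 0) u = 1"
  by (simp add: order_stat_density_def)

lemma binomial_tail_1_1 [simp]: "binomial_tail (Suc 0) (Suc 0) p = p"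
  by (simp add: binomial_tail_def)

lemma order_stat_density_eq:
  assumes "1 \<le> k"
  shows "order_stat_density m k u = real k * real (m choose k) * u ^ (k - 1) * (1 - u) ^ (m - k)"
proof -
  have "real k * real (m choose k) = real m * real ((m - 1) choose (k - 1))"
    using times_binomial_minus1_eq[of k m] assms by (metis of_nat_mult less_le_trans zero_less_one)
  then show ?thesis
    unfolding order_stat_density_def by simp
qed

lemma order_stat_density_nonneg: "0 \<le> u \<Longrightarrow> u \<le> 1 \<Longrightarrow> 0 \<le> order_stat_density m k u"
  by (simp add: order_stat_density_def)

lemma order_stat_density_le:
  assumes "0 \<le> u" "u \<le> 1"
  shows "order_stat_density m k u \<le> real m * real ((m - 1) choose (k - 1))"
proof -
  have "u ^ (k - 1) * (1 - u) ^ (m - k) \<le> 1"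
    using assms by (intro mult_le_one power_le_one) auto
  then show ?thesis
    unfolding order_stat_density_def using assms
    by (metis mult.assoc mult_left_le of_nat_0_le_iff zero_le_mult_iff)
qed

lemma isCont_order_stat_density [continuous_intros]: "isCont (order_stat_density m k) u"
  unfolding order_stat_density_def by (intro continuous_intros)

lemma borel_measurable_order_stat_density [measurable]:
  "order_stat_density m k \<in> borel_measurable borel"
  unfolding order_stat_density_def by measurable

lemma order_stat_density_reflect:
  "1 \<le> k \<Longrightarrow> k \<le> m \<Longrightarrow> order_stat_density m k (1 - u) = order_stat_density m (m - k + 1) u"
  unfolding order_stat_density_def using binomial_symmetric[of "k - 1" "m - 1"]
  by (simp add: algebra_simps)

lemma has_real_derivative_binomial_term:
  assumes "1 \<le> i" "i \<le> m"
  shows "((\<lambda>p. real (m choose i) * p ^ i * (1 - p) ^ (m - i)) has_real_derivative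
          order_stat_density m i p - order_stat_density m (Suc i) p) (at p)"
proof -
  have "((\<lambda>p. real (m choose i) * p ^ i * (1 - p) ^ (m - i)) has_real_derivative
      (real (m choose i) * real i) * p ^ (i - 1) * (1 - p) ^ (m - i)
      - (real (m choose i) * real (m - i)) * p ^ i * (1 - p) ^ (m - i - 1)) (at p)"
    by (auto intro!: derivative_eq_intros simp: algebra_simps)
  moreover have "real (m choose i) * real i = real m * real ((m - 1) choose (i - 1))"
    using times_binomial_minus1_eq[of i m] assms by (metis of_nat_mult mult.commute less_le_trans zero_less_one)
  moreover have "real (m choose i) * real (m - i) = real m * real ((m - 1) choose i)"
    using binomial_absorb_comp[of m i] by (metis of_nat_mult mult.commute)
  ultimately show ?thesis
    unfolding order_stat_density_def by simp
qed

lemma has_real_derivative_binomial_tail: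
  assumes "1 \<le> k" "k \<le> m"
  shows "(binomial_tail m k has_real_derivative order_stat_density m k p) (at p)"
proof -
  have "(binomial_tail m k has_real_derivative
          (\<Sum>i = k..m. order_stat_density m i p - order_stat_density m (Suc i) p)) (at p)"
    unfolding binomial_tail_def[abs_def]
    by (rule DERIV_sum) (use assms in \<open>auto intro!: has_real_derivative_binomial_term\<close>)
  also have "(\<Sum>i = k..m. order_stat_density m i p - order_stat_density m (Suc i) p)
      = order_stat_density m k p - order_stat_density m (Suc m) p"
    using sum_Suc_diff[of k m "\<lambda>i. - order_stat_density m i p"] assms by simp
  also have "order_stat_density m (Suc m) p = 0"
    using assms by (simp add: order_stat_density_def)
  finally show ?thesis by simp
qed

lemma isCont_binomial_tail: "1 \<le> k \<Longrightarrow> k \<le> m \<Longrightarrow> isCont (binomial_tail m k) p"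
  by (rule DERIV_isCont[OF has_real_derivative_binomial_tail])

lemma binomial_tail_0: "1 \<le> k \<Longrightarrow> binomial_tail m k 0 = 0"
  by (auto simp: binomial_tail_def intro!: sum.neutral)

lemma binomial_tail_1: "k \<le> m \<Longrightarrow> binomial_tail m k 1 = 1"
proof -
  assume "k \<le> m"
  then have "{k..m} = insert m {k..<m}" by auto
  then show ?thesis by (auto simp: binomial_tail_def intro!: sum.neutral)
qed

lemma binomial_tail_nonneg: "0 \<le> p \<Longrightarrow> p \<le> 1 \<Longrightarrow> 0 \<le> binomial_tail m k p"
  unfolding binomial_tail_def by (intro sum_nonneg) auto

section \<open>Integrals against the Beta densities\<close>

lemma set_integral_FTC_nonneg_Ioo:
  fixes f F :: "real \<Rightarrow> real"
  assumes "a < b"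
    and "\<And>x. a < x \<Longrightarrow> x < b \<Longrightarrow> (F has_real_derivative f x) (at x)"
    and "\<And>x. a < x \<Longrightarrow> x < b \<Longrightarrow> isCont f x"
    and "\<And>x. a < x \<Longrightarrow> x < b \<Longrightarrow> 0 \<le> f x"
    and "(F \<longlongrightarrow> A) (at_right a)" and "(F \<longlongrightarrow> B) (at_left b)"
  shows "set_integrable lborel {a<..<b} f" and "(LINT x:{a<..<b}|lborel. f x) = B - A"
proof -
  note FTC = interval_integral_FTC_nonneg[of "ereal a" "ereal b" F f A B]
  have "set_integrable lborel (einterval a b) f \<and> (LBINT x=ereal a..ereal b. f x) = B - A"
    using assms by (intro conjI FTC) (auto simp: ereal_tendsto_simps1)
  then show "set_integrable lborel {a<..<b} f" and "(LINT x:{a<..<b}|lborel. f x) = B - A"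
    using \<open>a < b\<close> by (simp_all add: interval_lebesgue_integral_def)
qed

lemma set_integral_order_stat_density:
  assumes "1 \<le> k" "k \<le> m"
  shows "set_integrable lborel {0<..<1} (order_stat_density m k)"
    and "(LINT u:{0<..<1}|lborel. order_stat_density m k u) = 1"
proof -
  have "(binomial_tail m k \<longlongrightarrow> binomial_tail m k p) (at_right p)"
       "(binomial_tail m k \<longlongrightarrow> binomial_tail m k p) (at_left p)" for p
    using isCont_binomial_tail[OF assms] by (simp_all add: isCont_def filterlim_at_split)
  note FTC = set_integral_FTC_nonneg_Ioo[OF _ has_real_derivative_binomial_tail[OF assms]
      isCont_order_stat_density order_stat_density_nonneg this(1)[of 0] this(2)[of 1]]
  then show "set_integrable lborel {0<..<1} (order_stat_density m k)"
    and "(LINT u:{0<..<1}|lborel. order_stat_density m k u) = 1"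
    using assms by (simp_all add: binomial_tail_0 binomial_tail_1)
qed

text \<open>The terms of \<open>binomial_tail m k\<close> are the densities \<open>order_stat_density (m + 1) (i + 1) / (m + 1)\<close>,
  so \<open>u * binomial_tail m k u - (\<Sum>i = k..m. binomial_tail (m + 1) (i + 1) u / (m + 1))\<close> is an
  antiderivative of \<open>u * order_stat_density m k u\<close>.\<close>

lemma set_integral_mult_order_stat_density_id:
  assumes "1 \<le> k" "k \<le> m"
  shows "set_integrable lborel {0<..<1} (\<lambda>u. u * order_stat_density m k u)"
    and "(LINT u:{0<..<1}|lborel. u * order_stat_density m k u) = real k / (real m + 1)"
proof -
  define R where "R u = (\<Sum>i = k..m. binomial_tail (m + 1) (Suc i) u / real (m + 1))" for u
  define F where "F u = u * binomial_tail m k u - R u" for u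
  have "(\<Sum>i = k..m. order_stat_density (m + 1) (Suc i) u / real (m + 1)) = binomial_tail m k u" for u
    unfolding binomial_tail_def by (rule sum.cong) (simp_all add: order_stat_density_def)
  moreover have "(R has_real_derivative
      (\<Sum>i = k..m. order_stat_density (m + 1) (Suc i) u / real (m + 1))) (at u)" for u
    unfolding R_def[abs_def] using assms
    by (intro DERIV_sum DERIV_cdivide has_real_derivative_binomial_tail) auto
  ultimately have R': "(R has_real_derivative binomial_tail m k u) (at u)" for u
    by simp
  have F': "(F has_real_derivative u * order_stat_density m k u) (at u)" for u
    unfolding F_def[abs_def]
    by (rule DERIV_cong[OF DERIV_diff[OF DERIV_mult[OF DERIV_ident
          has_real_derivative_binomial_tail[OF assms]] R']]) simp
  have F_cont: "isCont F u" for u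
    using DERIV_isCont[OF F'] .
  have "F 0 = 0"
    using assms by (simp add: F_def R_def binomial_tail_0)
  moreover have "F 1 = real k / (real m + 1)"
    using assms by (simp add: F_def R_def binomial_tail_1 field_simps of_nat_diff)
  ultimately have lim0: "(F \<longlongrightarrow> 0) (at_right 0)"
    and lim1: "(F \<longlongrightarrow> real k / (real m + 1)) (at_left 1)"
    using F_cont[of 0] F_cont[of 1] by (simp_all add: isCont_def filterlim_at_split)
  have cont: "isCont (\<lambda>u. u * order_stat_density m k u) u" for u
    by (intro continuous_intros)
  have nonneg: "0 \<le> u * order_stat_density m k u" if "0 < u" "u < 1" for u
    using that by (simp add: order_stat_density_nonneg)
  note FTC = set_integral_FTC_nonneg_Ioo[OF zero_less_one F' cont nonneg lim0 lim1]
  show "set_integrable lborel {0<..<1} (\<lambda>u. u * order_stat_density m k u)"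
    and "(LINT u:{0<..<1}|lborel. u * order_stat_density m k u) = real k / (real m + 1)"
    using FTC by simp_all
qed

lemma binomial_tail_eq_mult:
  assumes "1 \<le> k"
  shows "binomial_tail m k u = u * (\<Sum>i = k..m. real (m choose i) * u ^ (i - 1) * (1 - u) ^ (m - i))"
  unfolding binomial_tail_def sum_distrib_left
proof (rule sum.cong)
  fix i assume "i \<in> {k..m}"
  then have "u ^ i = u * u ^ (i - 1)"
    using assms by (metis Suc_diff_le diff_Suc_1 le_trans atLeastAtMost_iff power_Suc)
  then show "real (m choose i) * u ^ i * (1 - u) ^ (m - i)
      = u * (real (m choose i) * u ^ (i - 1) * (1 - u) ^ (m - i))"
    by simp
qed simp

lemma has_real_derivative_sum_binomial_tail_divide:
  assumes "1 \<le> k"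
  shows "((\<lambda>u. \<Sum>i = k..m. binomial_tail m i u / real i) has_real_derivative
          (\<Sum>i = k..m. real (m choose i) * u ^ (i - 1) * (1 - u) ^ (m - i))) (at u)"
proof -
  have "((\<lambda>u. \<Sum>i = k..m. binomial_tail m i u / real i) has_real_derivative
      (\<Sum>i = k..m. order_stat_density m i u / real i)) (at u)"
    using assms by (intro DERIV_sum DERIV_cdivide has_real_derivative_binomial_tail) auto
  moreover have "(\<Sum>i = k..m. order_stat_density m i u / real i)
      = (\<Sum>i = k..m. real (m choose i) * u ^ (i - 1) * (1 - u) ^ (m - i))"
    using assms by (intro sum.cong) (auto simp: order_stat_density_eq)
  ultimately show ?thesis
    by simp
qed

lemma tendsto_ln_mult_binomial_tail:
  assumes "1 \<le> k"
  shows "((\<lambda>u. ln u * binomial_tail m k u) \<longlongrightarrow> 0) (at_right 0)"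
proof -
  define P where "P u = (\<Sum>i = k..m. real (m choose i) * u ^ (i - 1) * (1 - u) ^ (m - i))" for u :: real
  have "isCont P 0"
    unfolding P_def by (intro continuous_intros)
  moreover have "((\<lambda>u::real. u * ln u) \<longlongrightarrow> 0) (at_right 0)"
    by real_asymp
  ultimately have "((\<lambda>u. (u * ln u) * P u) \<longlongrightarrow> 0 * P 0) (at_right 0)"
    by (intro tendsto_intros) (simp_all add: isCont_def filterlim_at_split)
  then show ?thesis
    using binomial_tail_eq_mult[OF assms] unfolding P_def by (simp add: mult_ac)
qed

text \<open>Since \<open>\<Sum>i = k..m. binomial_tail m i u / i\<close> has derivative \<open>binomial_tail m k u / u\<close>, an
  antiderivative of \<open>-ln u * order_stat_density m k u\<close> is
  \<open>-ln u * binomial_tail m k u + (\<Sum>i = k..m. binomial_tail m i u / i)\<close>.\<close>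

lemma set_integral_mult_order_stat_density_neg_ln:
  assumes "1 \<le> k" "k \<le> m"
  shows "set_integrable lborel {0<..<1} (\<lambda>u. - ln u * order_stat_density m k u)"
    and "(LINT u:{0<..<1}|lborel. - ln u * order_stat_density m k u) = (\<Sum>i = k..m. 1 / real i)"
proof -
  define P where "P u = (\<Sum>i = k..m. real (m choose i) * u ^ (i - 1) * (1 - u) ^ (m - i))" for u :: real
  define R where "R u = (\<Sum>i = k..m. binomial_tail m i u / real i)" for u
  define F where "F u = - ln u * binomial_tail m k u + R u" for u
  have tail_eq: "binomial_tail m k u = u * P u" for u
    unfolding P_def using binomial_tail_eq_mult assms(1) .
  have R': "(R has_real_derivative P u) (at u)" for u
    unfolding R_def[abs_def] P_def using has_real_derivative_sum_binomial_tail_divide assms(1) .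
  have F': "(F has_real_derivative - ln u * order_stat_density m k u) (at u)" if "0 < u" "u < 1" for u
    unfolding F_def[abs_def]
    by (rule DERIV_cong[OF DERIV_add[OF DERIV_mult[OF DERIV_minus[OF DERIV_ln_divide[OF that(1)]]
          has_real_derivative_binomial_tail[OF assms]] R']])
      (use that in \<open>simp add: tail_eq\<close>)
  have R_cont: "isCont R u" for u
    using DERIV_isCont[OF R'] .
  have "R 0 = 0"
    using assms by (auto simp: R_def binomial_tail_0 intro!: sum.neutral)
  moreover have "((\<lambda>u. - (ln u * binomial_tail m k u) + R u) \<longlongrightarrow> - 0 + R 0) (at_right 0)"
    using tendsto_ln_mult_binomial_tail[OF assms(1)] R_cont[of 0]
    by (intro tendsto_intros) (simp_all add: isCont_def filterlim_at_split)
  ultimately have lim0: "(F \<longlongrightarrow> 0) (at_right 0)"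
    by (simp add: F_def[abs_def])
  have "isCont F 1"
    unfolding F_def using assms by (intro continuous_intros isCont_binomial_tail R_cont) auto
  moreover have "F 1 = (\<Sum>i = k..m. 1 / real i)"
    using assms by (auto simp: F_def R_def binomial_tail_1 intro!: sum.cong)
  ultimately have lim1: "(F \<longlongrightarrow> (\<Sum>i = k..m. 1 / real i)) (at_left 1)"
    by (simp add: isCont_def filterlim_at_split)
  have cont: "isCont (\<lambda>u. - ln u * order_stat_density m k u) u" if "0 < u" "u < 1" for u
    using that by (intro continuous_intros) auto
  have nonneg: "0 \<le> - ln u * order_stat_density m k u" if "0 < u" "u < 1" for u
    using that by (intro mult_nonneg_nonneg order_stat_density_nonneg) auto
  note FTC = set_integral_FTC_nonneg_Ioo[OF zero_less_one F' cont nonneg lim0 lim1]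
  show "set_integrable lborel {0<..<1} (\<lambda>u. - ln u * order_stat_density m k u)"
    and "(LINT u:{0<..<1}|lborel. - ln u * order_stat_density m k u) = (\<Sum>i = k..m. 1 / real i)"
    using FTC by simp_all
qed

lemma set_integral_reflect_Ioo_0_1:
  fixes f :: "real \<Rightarrow> real"
  shows "set_integrable lborel {0<..<1} (\<lambda>u. f (1 - u)) \<longleftrightarrow> set_integrable lborel {0<..<1} f"
    and "(LINT u:{0<..<1}|lborel. f (1 - u)) = (LINT u:{0<..<1}|lborel. f u)"
proof -
  let ?g = "\<lambda>u. indicator {0<..<1} u * f u"
  have reflect: "?g (1 + (-1) * u) = indicator {0<..<1} u * f (1 - u)" for u
    by (auto simp: indicator_def)
  show "set_integrable lborel {0<..<1} (\<lambda>u. f (1 - u)) \<longleftrightarrow> set_integrable lborel {0<..<1} f"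
    using lborel_integrable_real_affine_iff[of "-1" ?g 1]
    unfolding set_integrable_def reflect by simp
  show "(LINT u:{0<..<1}|lborel. f (1 - u)) = (LINT u:{0<..<1}|lborel. f u)"
    using lborel_integral_real_affine[of "-1" ?g 1]
    unfolding set_lebesgue_integral_def reflect by simp
qed

lemma set_integral_mult_order_stat_density_neg_ln_1m:
  assumes "1 \<le> k" "k \<le> m"
  shows "set_integrable lborel {0<..<1} (\<lambda>u. - ln (1 - u) * order_stat_density m k u)"
    and "(LINT u:{0<..<1}|lborel. - ln (1 - u) * order_stat_density m k u)
           = (\<Sum>i = m - k + 1..m. 1 / real i)"
proof -
  let ?f = "\<lambda>u. - ln u * order_stat_density m (m - k + 1) u"
  have reflect: "?f (1 - u) = - ln (1 - u) * order_stat_density m k u" for u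
    using order_stat_density_reflect[of "m - k + 1" m u] assms by simp
  have "1 \<le> m - k + 1" "m - k + 1 \<le> m"
    using assms by auto
  note neg_ln = set_integral_mult_order_stat_density_neg_ln[OF this]
  show "set_integrable lborel {0<..<1} (\<lambda>u. - ln (1 - u) * order_stat_density m k u)"
    using neg_ln(1) set_integral_reflect_Ioo_0_1(1)[of ?f] unfolding reflect by simp
  show "(LINT u:{0<..<1}|lborel. - ln (1 - u) * order_stat_density m k u)
      = (\<Sum>i = m - k + 1..m. 1 / real i)"
    using neg_ln(2) set_integral_reflect_Ioo_0_1(2)[of ?f] unfolding reflect by simp
qed

section \<open>The quantile transform\<close>

lemma quantile_le_iff:
  assumes N: "real_distribution N" and u: "0 < u" "u < 1"
  shows "quantile (cdf N) u \<le> t \<longleftrightarrow> u \<le> cdf N t"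
proof -
  interpret real_distribution N by fact
  let ?S = "{x. u \<le> cdf N x}"
  have "eventually (\<lambda>x. u < cdf N x) at_top"
    using order_tendstoD(1)[OF cdf_lim_at_top_prob u(2)] .
  then have nonempty: "?S \<noteq> {}"
    by (auto simp: eventually_at_top_linorder intro: less_imp_le)
  have "eventually (\<lambda>x. cdf N x < u) at_bot"
    using order_tendstoD(2)[OF cdf_lim_at_bot u(1)] .
  then obtain x0 where "\<And>x. x \<le> x0 \<Longrightarrow> cdf N x < u"
    by (auto simp: eventually_at_bot_linorder)
  then have bdd: "bdd_below ?S"
    by (metis bdd_belowI linorder_not_le mem_Collect_eq not_less_iff_gr_or_eq)
  have "u \<le> cdf N (Inf ?S)"
  proof (rule tendsto_lowerbound)
    show "(cdf N \<longlongrightarrow> cdf N (Inf ?S)) (at_right (Inf ?S))"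
      using cdf_is_right_cont[of "Inf ?S"] by (simp add: continuous_within)
    show "\<forall>\<^sub>F x in at_right (Inf ?S). u \<le> cdf N x"
    proof (rule eventually_at_rightI[where b="Inf ?S + 1"])
      fix x assume "x \<in> {Inf ?S<..<Inf ?S + 1}"
      then obtain s where "s \<in> ?S" "s < x"
        using cInf_less_iff[OF nonempty bdd] by auto
      then show "u \<le> cdf N x"
        using cdf_nondecreasing[of s x] by auto
    qed simp
  qed simp
  then show ?thesis
    unfolding quantile_def
    using cdf_nondecreasing[of "Inf ?S" t] by (auto intro: cInf_lower bdd)
qed

lemma mono_on_quantile: "real_distribution N \<Longrightarrow> mono_on {0<..<1} (quantile (cdf N))"
  by (intro mono_onI) (metis greaterThanLessThan_iff order.trans order_refl quantile_le_iff)

text \<open>Outside \<open>(0, 1)\<close> the quantile function takes junk values (infima of \<open>UNIV\<close> and of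
  \<open>{}\<close>); cutting them off gives a Borel function on the whole line.\<close>

definition quantile_transform :: "real measure \<Rightarrow> real \<Rightarrow> real" where
  "quantile_transform N u = indicator {0<..<1} u * quantile (cdf N) u"

lemma borel_measurable_quantile_transform:
  assumes "real_distribution N"
  shows "quantile_transform N \<in> borel_measurable borel"
proof -
  have "quantile (cdf N) \<in> borel_measurable (restrict_space borel {0<..<1})"
    by (rule borel_measurable_mono_on_fnc[OF mono_on_quantile[OF assms]])
  then have "(\<lambda>u. indicator {0<..<1} u *\<^sub>R quantile (cdf N) u) \<in> borel_measurable borel"
    by (subst (asm) borel_measurable_restrict_space_iff) simp_all
  then show ?thesis
    by (simp add: quantile_transform_def[abs_def])
qed

text \<open>\<open>order_stat_distr m k\<close> is the law of the \<open>k\<close>-th of \<open>m\<close> uniform order statistics;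
  its image under the quantile transform of \<open>N\<close> is the law of the \<open>k\<close>-th order statistic of an
  \<open>N\<close>-sample.\<close>

definition order_stat_distr :: "nat \<Rightarrow> nat \<Rightarrow> real measure" where
  "order_stat_distr m k = density lborel (\<lambda>u. ennreal (indicator {0<..<1} u * order_stat_density m k u))"

lemma sets_order_stat_distr [simp, measurable_cong]: "sets (order_stat_distr m k) = sets borel"
  by (simp add: order_stat_distr_def)

lemma space_order_stat_distr [simp]: "space (order_stat_distr m k) = UNIV"
  by (simp add: order_stat_distr_def)

lemma emeasure_order_stat_distr:
  assumes k: "1 \<le> k" "k \<le> m" and p: "0 \<le> p" "p \<le> 1" and A: "A \<in> sets borel"
    and A_Ioo: "\<And>u. 0 < u \<Longrightarrow> u < 1 \<Longrightarrow> u \<in> A \<longleftrightarrow> u \<le> p"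
  shows "emeasure (order_stat_distr m k) A = ennreal (binomial_tail m k p)"
proof -
  have "emeasure (order_stat_distr m k) A
      = (\<integral>\<^sup>+ u. ennreal (indicator {0<..<1} u * order_stat_density m k u) * indicator A u \<partial>lborel)"
    unfolding order_stat_distr_def using A by (subst emeasure_density) auto
  also have "\<dots> = (\<integral>\<^sup>+ u. ennreal (indicator {0..p} u * order_stat_density m k u) \<partial>lborel)"
  proof (rule nn_integral_cong_AE)
    have "AE u in lborel. u \<noteq> 0" "AE u in lborel. u \<noteq> 1"
      by (rule AE_lborel_singleton)+
    then show "AE u in lborel. ennreal (indicator {0<..<1} u * order_stat_density m k u) * indicator A u
        = ennreal (indicator {0..p} u * order_stat_density m k u)"
      by eventually_elim (use A_Ioo p in \<open>auto simp: indicator_def\<close>)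
  qed
  also have "\<dots> = ennreal (integral\<^sup>L lborel (\<lambda>u. indicator {0..p} u * order_stat_density m k u))"
    by (rule nn_integral_eq_integral)
      (use p borel_integrable_atLeastAtMost'[of 0 p "order_stat_density m k"] in
        \<open>auto simp: set_integrable_def continuous_at_imp_continuous_on isCont_order_stat_density
           indicator_def order_stat_density_nonneg\<close>)
  also have "integral\<^sup>L lborel (\<lambda>u. indicator {0..p} u * order_stat_density m k u)
      = binomial_tail m k p - binomial_tail m k 0"
    using integral_FTC_atLeastAtMost[OF p(1), of "binomial_tail m k" "order_stat_density m k"]
      has_real_derivative_binomial_tail[OF k]
    by (simp add: has_real_derivative_iff_has_vector_derivative[symmetric] has_field_derivative_at_within
        continuous_at_imp_continuous_on isCont_order_stat_density)
  finally show ?thesis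
    using k by (simp add: binomial_tail_0)
qed

lemma real_distribution_order_stat_distr:
  assumes "1 \<le> k" "k \<le> m"
  shows "real_distribution (order_stat_distr m k)"
proof -
  have "emeasure (order_stat_distr m k) UNIV = 1"
    using emeasure_order_stat_distr[OF assms, of 1 UNIV] assms by (simp add: binomial_tail_1)
  then have "prob_space (order_stat_distr m k)"
    by (intro prob_spaceI) (simp add: order_stat_distr_def)
  then show ?thesis
    by (simp add: real_distribution_def real_distribution_axioms_def)
qed

lemma cdf_distr_quantile_transform:
  assumes N: "real_distribution N" and k: "1 \<le> k" "k \<le> m"
  shows "cdf (distr (order_stat_distr m k) borel (quantile_transform N)) t = binomial_tail m k (cdf N t)"
proof -
  interpret N: real_distribution N by fact
  note Q_borel = borel_measurable_quantile_transform[OF N]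
  have "emeasure (distr (order_stat_distr m k) borel (quantile_transform N)) {..t}
      = emeasure (order_stat_distr m k) (quantile_transform N -` {..t})"
    using Q_borel by (subst emeasure_distr) auto
  also have "\<dots> = ennreal (binomial_tail m k (cdf N t))"
  proof (rule emeasure_order_stat_distr[OF k])
    show "quantile_transform N -` {..t} \<in> sets borel"
      using measurable_sets_borel[OF Q_borel, of "{..t}"] by simp
    fix u :: real assume "0 < u" "u < 1"
    then show "u \<in> quantile_transform N -` {..t} \<longleftrightarrow> u \<le> cdf N t"
      using quantile_le_iff[OF N, of u t] by (simp add: quantile_transform_def)
  qed (auto simp: N.cdf_nonneg N.cdf_bounded_prob)
  moreover have "0 \<le> binomial_tail m k (cdf N t)"
    by (intro binomial_tail_nonneg N.cdf_nonneg N.cdf_bounded_prob)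
  ultimately show ?thesis
    by (simp add: cdf_def[of "distr _ _ _"] measure_def)
qed

lemma distr_quantile_transform:
  assumes "real_distribution N"
  shows "distr (order_stat_distr 1 1) borel (quantile_transform N) = N"
proof (rule cdf_unique)
  show "real_distribution (distr (order_stat_distr 1 1) borel (quantile_transform N))"
    using real_distribution_order_stat_distr[of 1 1] borel_measurable_quantile_transform[OF assms]
    by (intro prob_space.real_distribution_distr) (auto simp: real_distribution_def)
  show "cdf (distr (order_stat_distr 1 1) borel (quantile_transform N)) = cdf N"
    using cdf_distr_quantile_transform[OF assms, of 1 1] by auto
qed fact

lemma integral_distr_quantile_transform:
  assumes "real_distribution N"
  shows "integral\<^sup>L (distr (order_stat_distr m k) borel (quantile_transform N)) (\<lambda>x. x)
       = (LINT u:{0<..<1}|lborel. quantile (cdf N) u * order_stat_density m k u)"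
proof -
  have "integral\<^sup>L (distr (order_stat_distr m k) borel (quantile_transform N)) (\<lambda>x. x)
      = integral\<^sup>L (order_stat_distr m k) (quantile_transform N)"
    using borel_measurable_quantile_transform[OF assms] by (subst integral_distr) auto
  also have "\<dots> = integral\<^sup>L lborel (\<lambda>u. (indicator {0<..<1} u * order_stat_density m k u)
      *\<^sub>R quantile_transform N u)"
    unfolding order_stat_distr_def using borel_measurable_quantile_transform[OF assms]
    by (intro integral_density) (auto simp: indicator_def order_stat_density_nonneg)
  also have "(\<lambda>u. (indicator {0<..<1} u * order_stat_density m k u) *\<^sub>R quantile_transform N u)
      = (\<lambda>u. indicator {0<..<1} u *\<^sub>R (quantile (cdf N) u * order_stat_density m k u))"
    by (auto simp: quantile_transform_def indicator_def)
  finally show ?thesis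
    unfolding set_lebesgue_integral_def .
qed

lemma expectation_eq_set_integral_quantile:
  assumes "real_distribution N"
  shows "integral\<^sup>L N (\<lambda>x. x) = (LINT u:{0<..<1}|lborel. quantile (cdf N) u)"
  using integral_distr_quantile_transform[OF assms, of 1 1] distr_quantile_transform[OF assms]
  by simp

lemma set_integrable_quantile:
  assumes N: "real_distribution N" and "integrable N (\<lambda>x. x)"
  shows "set_integrable lborel {0<..<1} (quantile (cdf N))"
proof -
  note Q_borel = borel_measurable_quantile_transform[OF N]
  have "integrable (distr (order_stat_distr 1 1) borel (quantile_transform N)) (\<lambda>x. x)"
    using assms distr_quantile_transform[OF N] by simp
  then have "integrable (order_stat_distr 1 1) (quantile_transform N)"
    using Q_borel by (subst (asm) integrable_distr_eq) auto
  then have "integrable lborel (\<lambda>u. indicator {0<..<1} u *\<^sub>R quantile_transform N u)"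
    unfolding order_stat_distr_def using Q_borel
    by (subst (asm) integrable_density) (auto simp: indicator_def)
  also have "(\<lambda>u. indicator {0<..<1} u *\<^sub>R quantile_transform N u)
      = (\<lambda>u. indicator {0<..<1} u *\<^sub>R quantile (cdf N) u)"
    by (auto simp: quantile_transform_def indicator_def)
  finally show ?thesis
    unfolding set_integrable_def .
qed

section \<open>Order statistics\<close>

lemma sorted_nth_le_iff:
  fixes ys :: "'a::linorder list"
  assumes "sorted ys" "k < length ys"
  shows "ys ! k \<le> t \<longleftrightarrow> k < card {i. i < length ys \<and> ys ! i \<le> t}"
proof
  assume a: "ys ! k \<le> t"
  have "{0..k} \<subseteq> {i. i < length ys \<and> ys ! i \<le> t}"
  proof
    fix i assume "i \<in> {0..k}"
    then have "i \<le> k" by simp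
    then have "ys ! i \<le> ys ! k" using assms sorted_nth_mono by blast
    then show "i \<in> {i. i < length ys \<and> ys ! i \<le> t}" using a \<open>i \<le> k\<close> assms by auto
  qed
  from card_mono[OF _ this] show "k < card {i. i < length ys \<and> ys ! i \<le> t}" by simp
next
  assume a: "k < card {i. i < length ys \<and> ys ! i \<le> t}"
  show "ys ! k \<le> t"
  proof (rule ccontr)
    assume "\<not> ys ! k \<le> t"
    have "{i. i < length ys \<and> ys ! i \<le> t} \<subseteq> {..<k}"
    proof
      fix i assume i: "i \<in> {i. i < length ys \<and> ys ! i \<le> t}"
      show "i \<in> {..<k}"
      proof (rule ccontr)
        assume "i \<notin> {..<k}"
        then have "k \<le> i" by simp
        then have "ys ! k \<le> ys ! i" using assms i sorted_nth_mono by blast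
        then show False using i \<open>\<not> ys ! k \<le> t\<close> by auto
      qed
    qed
    from card_mono[OF _ this] a show False by simp
  qed
qed

lemma order_stat_le_iff:
  assumes "1 \<le> j" "j \<le> m"
  shows "order_stat m j x \<le> t \<longleftrightarrow> j \<le> card {i\<in>{..<m}. x i \<le> t}"
proof -
  let ?ys = "sort (map x [0..<m])"
  have "order_stat m j x \<le> t \<longleftrightarrow> j - 1 < card {i. i < length ?ys \<and> ?ys ! i \<le> t}"
    unfolding order_stat_def using assms by (intro sorted_nth_le_iff) auto
  also have "card {i. i < length ?ys \<and> ?ys ! i \<le> t} = length (filter (\<lambda>v. v \<le> t) ?ys)"
    by (simp add: length_filter_conv_card)
  also have "\<dots> = length (filter (\<lambda>v. v \<le> t) (map x [0..<m]))"
    by (simp add: filter_sort)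
  also have "\<dots> = card {i\<in>{..<m}. x i \<le> t}"
  proof -
    have "{i. i < m \<and> map x [0..<m] ! i \<le> t} = {i\<in>{..<m}. x i \<le> t}" by auto
    then show ?thesis by (simp add: length_filter_conv_card)
  qed
  finally show ?thesis using assms by linarith
qed

definition threshold_box :: "nat set \<Rightarrow> real \<Rightarrow> nat \<Rightarrow> real set" where
  "threshold_box S t i = (if i \<in> S then {..t} else {t<..})"

lemma threshold_box_below:
  assumes S: "S \<subseteq> {..<m}" and x: "x \<in> PiE {..<m} (threshold_box S t)"
  shows "{i\<in>{..<m}. x i \<le> t} = S"
proof (intro set_eqI iffI)
  fix i assume "i \<in> {i\<in>{..<m}. x i \<le> t}"
  then have i: "i < m" "x i \<le> t" by auto
  have "x i \<in> threshold_box S t i" using PiE_mem[OF x] i by simp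
  then show "i \<in> S" using i by (auto simp: threshold_box_def split: if_splits)
next
  fix i assume i: "i \<in> S"
  then have "i < m" using S by auto
  have "x i \<in> threshold_box S t i" using PiE_mem[OF x] \<open>i < m\<close> by simp
  then show "i \<in> {i\<in>{..<m}. x i \<le> t}" using i \<open>i < m\<close> by (simp add: threshold_box_def)
qed

lemma order_stat_le_eq_Union_threshold_box:
  assumes "1 \<le> j" "j \<le> m" and N: "sets N = sets borel"
  shows "{x \<in> space (PiM {..<m} (\<lambda>_. N)). order_stat m j x \<le> t} =
         (\<Union>S\<in>{S. S \<subseteq> {..<m} \<and> j \<le> card S}. PiE {..<m} (threshold_box S t))"
proof -
  have "space N = UNIV" using sets_eq_imp_space_eq[OF N] by simp
  then have sp: "space (PiM {..<m} (\<lambda>_. N)) = PiE {..<m} (\<lambda>_. UNIV)"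
    by (simp add: space_PiM)
  show ?thesis
  proof (rule set_eqI, rule iffI)
    fix x assume "x \<in> {x \<in> space (PiM {..<m} (\<lambda>_. N)). order_stat m j x \<le> t}"
    then have x: "x \<in> PiE {..<m} (\<lambda>_. UNIV)" "order_stat m j x \<le> t" unfolding sp by auto
    define S where "S = {i\<in>{..<m}. x i \<le> t}"
    have "j \<le> card S" using x(2) order_stat_le_iff[OF assms(1,2), of x t] unfolding S_def by blast
    moreover have "S \<subseteq> {..<m}" unfolding S_def by blast
    moreover have "x \<in> PiE {..<m} (threshold_box S t)"
    proof (rule PiE_I)
      fix i assume "i \<in> {..<m}"
      then show "x i \<in> threshold_box S t i" unfolding threshold_box_def S_def by auto
    next
      fix i assume "i \<notin> {..<m}"
      then show "x i = undefined" using x(1) by (rule PiE_arb[rotated])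
    qed
    ultimately show "x \<in> (\<Union>S\<in>{S. S \<subseteq> {..<m} \<and> j \<le> card S}. PiE {..<m} (threshold_box S t))" by blast
  next
    fix x assume "x \<in> (\<Union>S\<in>{S. S \<subseteq> {..<m} \<and> j \<le> card S}. PiE {..<m} (threshold_box S t))"
    then obtain S where S: "S \<subseteq> {..<m}" "j \<le> card S" and x: "x \<in> PiE {..<m} (threshold_box S t)" by blast
    have "x \<in> PiE {..<m} (\<lambda>_. UNIV)" using PiE_mono[of "{..<m}" "threshold_box S t" "\<lambda>_. UNIV"] x by blast
    then have "x \<in> space (PiM {..<m} (\<lambda>_. N))" unfolding sp .
    moreover have "{i\<in>{..<m}. x i \<le> t} = S" using threshold_box_below[OF S(1) x] .
    then have "order_stat m j x \<le> t" using order_stat_le_iff[OF assms(1,2), of x t] S by simp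
    ultimately show "x \<in> {x \<in> space (PiM {..<m} (\<lambda>_. N)). order_stat m j x \<le> t}" by blast
  qed
qed

lemma threshold_box_sets:
  assumes "sets N = sets borel"
  shows "PiE {..<m} (threshold_box S t) \<in> sets (PiM {..<m} (\<lambda>_. N))"
  by (rule sets_PiM_I_finite) (simp_all add: assms threshold_box_def)

lemma borel_measurable_order_stat:
  assumes "1 \<le> j" "j \<le> m" and N: "sets N = sets borel"
  shows "order_stat m j \<in> borel_measurable (PiM {..<m} (\<lambda>_. N))"
proof (rule borel_measurable_iff_le[THEN iffD2], rule allI)
  fix t
  have "finite {S. S \<subseteq> {..<m} \<and> j \<le> card S}"
    by (rule finite_subset[of _ "Pow {..<m}"]) auto
  then show "{x \<in> space (PiM {..<m} (\<lambda>_. N)). order_stat m j x \<le> t} \<in> sets (PiM {..<m} (\<lambda>_. N))"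
    unfolding order_stat_le_eq_Union_threshold_box[OF assms]
    by (intro sets.finite_UN threshold_box_sets[OF N])
qed

lemma sum_subsets_card_ge:
  fixes p :: real
  assumes "j \<le> m"
  shows "(\<Sum>S\<in>{S. S \<subseteq> {..<m} \<and> j \<le> card S}. p ^ card S * (1 - p) ^ (m - card S))
       = (\<Sum>k = j..m. real (m choose k) * p ^ k * (1 - p) ^ (m - k))"
proof -
  let ?SS = "{S. S \<subseteq> {..<m} \<and> j \<le> card S}"
  have fin: "finite ?SS" by (rule finite_subset[of _ "Pow {..<m}"]) auto
  have img: "card ` ?SS \<subseteq> {j..m}"
  proof
    fix k assume "k \<in> card ` ?SS"
    then obtain S where "S \<subseteq> {..<m}" "j \<le> card S" "k = card S" by auto
    moreover have "card S \<le> m" using card_mono[OF _ \<open>S \<subseteq> {..<m}\<close>] by simp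
    ultimately show "k \<in> {j..m}" by simp
  qed
  have "(\<Sum>S\<in>?SS. p ^ card S * (1 - p) ^ (m - card S))
      = (\<Sum>k\<in>{j..m}. \<Sum>S\<in>{S \<in> ?SS. card S = k}. p ^ card S * (1 - p) ^ (m - card S))"
    by (rule sum.group[OF fin _ img, symmetric]) simp
  also have "\<dots> = (\<Sum>k = j..m. real (m choose k) * p ^ k * (1 - p) ^ (m - k))"
  proof (rule sum.cong[OF refl])
    fix k assume k: "k \<in> {j..m}"
    have eq: "{S \<in> ?SS. card S = k} = {S. S \<subseteq> {..<m} \<and> card S = k}" using k by auto
    have "(\<Sum>S\<in>{S \<in> ?SS. card S = k}. p ^ card S * (1 - p) ^ (m - card S))
        = (\<Sum>S\<in>{S. S \<subseteq> {..<m} \<and> card S = k}. p ^ k * (1 - p) ^ (m - k))"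
      unfolding eq by (rule sum.cong) auto
    also have "\<dots> = real (m choose k) * p ^ k * (1 - p) ^ (m - k)"
      using n_subsets[of "{..<m}" k] by simp
    finally show "(\<Sum>S\<in>{S \<in> ?SS. card S = k}. p ^ card S * (1 - p) ^ (m - card S))
        = real (m choose k) * p ^ k * (1 - p) ^ (m - k)" .
  qed
  finally show ?thesis .
qed

lemma disjoint_family_on_threshold_box:
  "disjoint_family_on (\<lambda>S. PiE {..<m} (threshold_box S t)) {S. S \<subseteq> {..<m} \<and> j \<le> card S}"
proof (unfold disjoint_family_on_def, intro ballI impI)
  fix S S' assume S: "S \<in> {S. S \<subseteq> {..<m} \<and> j \<le> card S}" "S' \<in> {S. S \<subseteq> {..<m} \<and> j \<le> card S}"
    "S \<noteq> S'"
  have "x \<notin> PiE {..<m} (threshold_box S' t)" if "x \<in> PiE {..<m} (threshold_box S t)" for x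
    using threshold_box_below[of S m x t] threshold_box_below[of S' m x t] S that by auto
  then show "PiE {..<m} (threshold_box S t) \<inter> PiE {..<m} (threshold_box S' t) = {}"
    by blast
qed

lemma measure_threshold_box:
  assumes N: "real_distribution N" and S: "S \<subseteq> {..<m}"
  shows "measure (PiM {..<m} (\<lambda>_. N)) (PiE {..<m} (threshold_box S t))
       = cdf N t ^ card S * (1 - cdf N t) ^ (m - card S)"
proof -
  interpret N: real_distribution N by fact
  interpret P: product_prob_space "\<lambda>_. N" "{..<m}"
    by unfold_locales
  interpret P: finite_product_prob_space "\<lambda>_. N" "{..<m}"
    by unfold_locales simp
  have compl: "measure N {t<..} = 1 - cdf N t"
    using N.prob_compl[of "{..t}"] by (simp add: cdf_def Compl_eq_Diff_UNIV[symmetric] not_le)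
  have "measure (PiM {..<m} (\<lambda>_. N)) (PiE {..<m} (threshold_box S t))
      = (\<Prod>i\<in>{..<m}. measure N (threshold_box S t i))"
    by (rule P.finite_measure_PiM_emb) (auto simp: threshold_box_def)
  also have "\<dots> = (\<Prod>i\<in>{..<m}. if i \<in> S then cdf N t else 1 - cdf N t)"
    using compl by (intro prod.cong) (auto simp: threshold_box_def cdf_def)
  also have "\<dots> = cdf N t ^ card S * (1 - cdf N t) ^ (m - card S)"
    using S by (simp add: prod.If_cases Int_absorb1 Diff_eq[symmetric] card_Diff_subset finite_subset)
  finally show ?thesis .
qed

lemma cdf_order_stat:
  assumes N: "real_distribution N" and j: "1 \<le> j" "j \<le> m"
  shows "cdf (distr (PiM {..<m} (\<lambda>_. N)) borel (order_stat m j)) t = binomial_tail m j (cdf N t)"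
proof -
  interpret N: real_distribution N by fact
  interpret P: product_prob_space "\<lambda>_. N" "{..<m}"
    by unfold_locales
  let ?P = "PiM {..<m} (\<lambda>_. N)"
  let ?SS = "{S. S \<subseteq> {..<m} \<and> j \<le> card S}"
  have [measurable]: "order_stat m j \<in> borel_measurable ?P"
    by (rule borel_measurable_order_stat[OF j]) simp
  have "cdf (distr ?P borel (order_stat m j)) t = measure ?P (order_stat m j -` {..t} \<inter> space ?P)"
    unfolding cdf_def by (subst measure_distr) auto
  also have "order_stat m j -` {..t} \<inter> space ?P = {x \<in> space ?P. order_stat m j x \<le> t}"
    by auto
  also have "\<dots> = (\<Union>S\<in>?SS. PiE {..<m} (threshold_box S t))"
    by (rule order_stat_le_eq_Union_threshold_box[OF j]) simp
  also have "measure ?P \<dots> = (\<Sum>S\<in>?SS. measure ?P (PiE {..<m} (threshold_box S t)))"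
    by (rule P.finite_measure_finite_Union[OF _ _ disjoint_family_on_threshold_box])
      (auto intro: finite_subset[of _ "Pow {..<m}"] threshold_box_sets)
  also have "\<dots> = binomial_tail m j (cdf N t)"
    unfolding binomial_tail_def
    by (simp add: measure_threshold_box[OF N] sum_subsets_card_ge[OF j(2)])
  finally show ?thesis .
qed

lemma distr_order_stat:
  assumes N: "real_distribution N" and j: "1 \<le> j" "j \<le> m"
  shows "distr (PiM {..<m} (\<lambda>_. N)) borel (order_stat m j)
       = distr (order_stat_distr m j) borel (quantile_transform N)"
proof (rule cdf_unique)
  interpret N: real_distribution N by fact
  interpret P: product_prob_space "\<lambda>_. N" "{..<m}"
    by unfold_locales
  show "real_distribution (distr (PiM {..<m} (\<lambda>_. N)) borel (order_stat m j))"
    using borel_measurable_order_stat[OF j] by simp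
  show "real_distribution (distr (order_stat_distr m j) borel (quantile_transform N))"
    using real_distribution_order_stat_distr[OF j] borel_measurable_quantile_transform[OF N]
    by (intro prob_space.real_distribution_distr) (auto simp: real_distribution_def)
  show "cdf (distr (PiM {..<m} (\<lambda>_. N)) borel (order_stat m j))
      = cdf (distr (order_stat_distr m j) borel (quantile_transform N))"
    using cdf_order_stat[OF N j] cdf_distr_quantile_transform[OF N j] by auto
qed

lemma expectation_order_stat:
  assumes N: "real_distribution N" and j: "1 \<le> j" "j \<le> m"
  shows "integral\<^sup>L (PiM {..<m} (\<lambda>_. N)) (order_stat m j)
       = (LINT u:{0<..<1}|lborel. quantile (cdf N) u * order_stat_density m j u)"
proof -
  have "integral\<^sup>L (PiM {..<m} (\<lambda>_. N)) (order_stat m j)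
      = integral\<^sup>L (distr (PiM {..<m} (\<lambda>_. N)) borel (order_stat m j)) (\<lambda>x. x)"
    using borel_measurable_order_stat[OF j real_distribution.events_eq_borel[OF N]]
    by (subst integral_distr) auto
  then show ?thesis
    by (simp add: distr_order_stat[OF N j] integral_distr_quantile_transform[OF N])
qed

section \<open>Crossings of the density with the uniform density\<close>

lemma has_real_derivative_power_mult_power:
  "((\<lambda>u::real. u ^ Suc a * (1 - u) ^ Suc c) has_real_derivative
     u ^ a * (1 - u) ^ c * (real (Suc a) * (1 - u) - real (Suc c) * u)) (at u)"
proof -
  have "((\<lambda>u::real. u ^ Suc a * (1 - u) ^ Suc c) has_real_derivative
     real (Suc a) * u ^ a * (1 - u) ^ Suc c + u ^ Suc a * (real (Suc c) * (1 - u) ^ c * (- 1))) (at u)"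
  proof -
    have d1: "((\<lambda>u::real. u ^ Suc a) has_real_derivative real (Suc a) * u ^ a) (at u)"
      using DERIV_pow[of "Suc a" u] by simp
    have d2: "((\<lambda>u::real. (1 - u) ^ Suc c) has_real_derivative real (Suc c) * (1 - u) ^ c * (- 1)) (at u)"
      using DERIV_chain'[OF DERIV_diff[OF DERIV_const DERIV_ident, of 1 u] DERIV_pow[of "Suc c" "1 - u"]]
      by (simp add: o_def mult.commute)
    show ?thesis by (rule DERIV_cong[OF DERIV_mult[OF d1 d2]]) (simp add: algebra_simps)
  qed
  moreover have "real (Suc a) * u ^ a * (1 - u) ^ Suc c + u ^ Suc a * (real (Suc c) * (1 - u) ^ c * (- 1))
      = u ^ a * (1 - u) ^ c * (real (Suc a) * (1 - u) - real (Suc c) * u)"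
    by (simp add: algebra_simps)
  ultimately show ?thesis by simp
qed

lemma power_mult_power_mono:
  assumes "0 \<le> x" "x \<le> y" "y \<le> real (Suc a) / real (a + c + 2)"
  shows "x ^ Suc a * (1 - x) ^ Suc c \<le> y ^ Suc a * (1 - y) ^ Suc c"
proof (rule DERIV_nonneg_imp_nondecreasing[OF assms(2)])
  fix z assume z: "x \<le> z" "z \<le> y"
  have "real (Suc a) / real (a + c + 2) < 1" by (simp add: divide_less_eq)
  then have y1: "y < 1" using assms(3) by linarith
  have "z \<le> real (Suc a) / real (a + c + 2)" using z assms(3) by linarith
  then have "z * real (a + c + 2) \<le> real (Suc a)"
    by (simp add: le_divide_eq)
  then have A: "0 \<le> real (Suc a) * (1 - z) - real (Suc c) * z" by (simp add: algebra_simps)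
  have B: "0 \<le> z ^ a * (1 - z) ^ c" using z assms y1 by simp
  show "\<exists>d. ((\<lambda>u. u ^ Suc a * (1 - u) ^ Suc c) has_real_derivative d) (at z) \<and> 0 \<le> d"
    using mult_nonneg_nonneg[OF B A] has_real_derivative_power_mult_power by blast
qed

lemma power_mult_power_antimono:
  assumes "real (Suc a) / real (a + c + 2) \<le> x" "x \<le> y" "y \<le> 1"
  shows "y ^ Suc a * (1 - y) ^ Suc c \<le> x ^ Suc a * (1 - x) ^ Suc c"
proof (rule DERIV_nonpos_imp_nonincreasing[OF assms(2)])
  fix z assume z: "x \<le> z" "z \<le> y"
  have x0: "0 \<le> x" using assms(1) by (rule order_trans[rotated]) simp
  have "real (Suc a) / real (a + c + 2) \<le> z" using z assms(1) by linarith
  then have "real (Suc a) \<le> z * real (a + c + 2)"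
    by (simp add: divide_le_eq)
  then have A: "real (Suc a) * (1 - z) - real (Suc c) * z \<le> 0" by (simp add: algebra_simps)
  have B: "0 \<le> z ^ a * (1 - z) ^ c" using z assms x0 by simp
  show "\<exists>d. ((\<lambda>u. u ^ Suc a * (1 - u) ^ Suc c) has_real_derivative d) (at z) \<and> d \<le> 0"
    using mult_nonneg_nonpos[OF B A] has_real_derivative_power_mult_power by blast
qed

lemma order_stat_density_exceeds_1:
  assumes "2 \<le> k" "k \<le> m"
  obtains u where "0 \<le> u" "u \<le> 1" "1 < order_stat_density m k u"
proof (rule ccontr)
  assume "\<not> thesis"
  with that have le: "order_stat_density m k u \<le> 1" if "0 \<le> u" "u \<le> 1" for u
    using that by force
  have k: "1 \<le> k" "k \<le> m"
    using assms by simp_all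
  have "((\<lambda>u. 1 - order_stat_density m k u) has_integral
      ((1 - binomial_tail m k 1) - (0 - binomial_tail m k 0))) {0..1}"
  proof (rule fundamental_theorem_of_calculus)
    fix x :: real
    have "((\<lambda>u. u - binomial_tail m k u) has_real_derivative 1 - order_stat_density m k x) (at x)"
      by (rule DERIV_diff[OF DERIV_ident has_real_derivative_binomial_tail[OF k]])
    then show "((\<lambda>u. u - binomial_tail m k u) has_vector_derivative 1 - order_stat_density m k x)
        (at x within {0..1})"
      by (simp add: has_real_derivative_iff_has_vector_derivative[symmetric] has_field_derivative_at_within)
  qed simp
  then have "((\<lambda>u. 1 - order_stat_density m k u) has_integral 0) (cbox 0 1)"
    using k by (simp add: binomial_tail_0 binomial_tail_1)
  then have "1 - order_stat_density m k 0 = 0"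
    by (rule has_integral_0_cbox_imp_0[rotated 2])
      (auto intro!: continuous_at_imp_continuous_on continuous_intros le)
  moreover have "order_stat_density m k 0 = 0"
    using assms by (simp add: order_stat_density_def)
  ultimately show False
    by simp
qed

lemma order_stat_density_unimodal:
  assumes "1 < k" "k < m"
  obtains mode where "0 < mode" "mode < 1"
    and "\<And>x y. 0 \<le> x \<Longrightarrow> x \<le> y \<Longrightarrow> y \<le> mode \<Longrightarrow> order_stat_density m k x \<le> order_stat_density m k y"
    and "\<And>x y. mode \<le> x \<Longrightarrow> x \<le> y \<Longrightarrow> y \<le> 1 \<Longrightarrow> order_stat_density m k y \<le> order_stat_density m k x"
proof -
  define a where "a = k - 2"
  define c where "c = m - k - 1"
  define K where "K = real m * real ((m - 1) choose (k - 1))"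
  have "0 < K"
    unfolding K_def using assms by simp
  have density_eq: "order_stat_density m k u = K * (u ^ Suc a * (1 - u) ^ Suc c)" for u
    using assms unfolding order_stat_density_def K_def a_def c_def
    by (simp add: algebra_simps Suc_diff_Suc numeral_2_eq_2)
  show ?thesis
  proof (rule that[of "real (Suc a) / real (a + c + 2)"])
    fix x y :: real
    show "order_stat_density m k x \<le> order_stat_density m k y"
      if "0 \<le> x" "x \<le> y" "y \<le> real (Suc a) / real (a + c + 2)"
      unfolding density_eq using power_mult_power_mono[OF that] \<open>0 < K\<close> by simp
    show "order_stat_density m k y \<le> order_stat_density m k x"
      if "real (Suc a) / real (a + c + 2) \<le> x" "x \<le> y" "y \<le> 1"
      unfolding density_eq using power_mult_power_antimono[OF that] \<open>0 < K\<close> by simp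
  qed auto
qed

text \<open>For \<open>1 < k < m\<close> the density is unimodal, vanishes at both ends and has integral \<open>1\<close>, so it
  lies above \<open>1\<close> exactly on an interval.\<close>

lemma order_stat_density_crosses_1_twice:
  assumes "1 < k" "k < m"
  obtains c1 c2 where "0 < c1" "c1 < c2" "c2 < 1"
    and "\<And>u. c1 \<le> u \<Longrightarrow> u \<le> c2 \<Longrightarrow> 1 \<le> order_stat_density m k u"
    and "\<And>u. 0 \<le> u \<Longrightarrow> u \<le> 1 \<Longrightarrow> u < c1 \<or> c2 < u \<Longrightarrow> order_stat_density m k u \<le> 1"
proof -
  obtain mode where mode: "0 < mode" "mode < 1"
    and up: "\<And>x y. 0 \<le> x \<Longrightarrow> x \<le> y \<Longrightarrow> y \<le> mode \<Longrightarrow> order_stat_density m k x \<le> order_stat_density m k y"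
    and down: "\<And>x y. mode \<le> x \<Longrightarrow> x \<le> y \<Longrightarrow> y \<le> 1 \<Longrightarrow> order_stat_density m k y \<le> order_stat_density m k x"
    using order_stat_density_unimodal[OF assms] by metis
  obtain u0 where u0: "0 \<le> u0" "u0 \<le> 1" "1 < order_stat_density m k u0"
    using order_stat_density_exceeds_1[of k m] assms by auto
  have peak: "1 < order_stat_density m k mode"
    using up[of u0 mode] down[of mode u0] u0 by (cases "u0 \<le> mode") auto
  have at_0: "order_stat_density m k 0 = 0" and at_1: "order_stat_density m k 1 = 0"
    using assms by (simp_all add: order_stat_density_def)
  obtain c1 where c1: "0 \<le> c1" "c1 \<le> mode" "order_stat_density m k c1 = 1"
    using IVT[of "order_stat_density m k" 0 1 mode] at_0 peak mode
    by (auto intro: isCont_order_stat_density)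
  obtain c2 where c2: "mode \<le> c2" "c2 \<le> 1" "order_stat_density m k c2 = 1"
    using IVT2[of "order_stat_density m k" 1 1 mode] at_1 peak mode
    by (auto intro: isCont_order_stat_density)
  have strict: "0 < c1" "c1 < mode" "mode < c2" "c2 < 1"
    using c1 c2 at_0 at_1 peak by (auto simp: order.order_iff_strict)
  show ?thesis
  proof (rule that[of c1 c2])
    show "0 < c1" "c1 < c2" "c2 < 1"
      using strict by simp_all
  next
    fix u assume "c1 \<le> u" "u \<le> c2"
    then show "1 \<le> order_stat_density m k u"
      using up[of c1 u] down[of u c2] c1 c2 strict by (cases "u \<le> mode") auto
  next
    fix u assume "0 \<le> u" "u \<le> 1" "u < c1 \<or> c2 < u"
    then show "order_stat_density m k u \<le> 1"
      using up[of u c1] down[of c2 u] c1 c2 strict by auto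
  qed
qed

lemma order_stat_density_1_crosses_1:
  assumes "1 < m"
  obtains c where "0 < c" "c < 1"
    and "\<And>u. 0 \<le> u \<Longrightarrow> u \<le> c \<Longrightarrow> 1 \<le> order_stat_density m 1 u"
    and "\<And>u. c \<le> u \<Longrightarrow> u \<le> 1 \<Longrightarrow> order_stat_density m 1 u \<le> 1"
proof -
  have density_eq: "order_stat_density m 1 u = real m * (1 - u) ^ (m - 1)" for u
    by (simp add: order_stat_density_def)
  have antimono: "order_stat_density m 1 y \<le> order_stat_density m 1 x" if "x \<le> y" "y \<le> 1" for x y
    unfolding density_eq using that by (intro mult_left_mono power_mono) auto
  have at_0: "order_stat_density m 1 0 = real m" and at_1: "order_stat_density m 1 1 = 0"
    using assms unfolding density_eq by simp_all
  obtain c where c: "0 \<le> c" "c \<le> 1" "order_stat_density m 1 c = 1"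
    using IVT2[of "order_stat_density m 1" 1 1 0] at_0 at_1 assms
    by (auto intro: isCont_order_stat_density)
  have "c \<noteq> 0" "c \<noteq> 1"
    using c at_0 at_1 assms by auto
  with c show ?thesis
    using that[of c] antimono[of _ c] antimono[of c] by auto
qed

section \<open>Comparison of the means\<close>

lemma slope_sym: "((p::real) - q) / (x - z) = (q - p) / (z - x)"
  by (metis minus_diff_eq minus_divide_divide)

lemma convex_on_le_secant:
  fixes G :: "real \<Rightarrow> real"
  assumes G: "convex_on I G" and I: "a \<in> I" "b \<in> I" and y: "a \<le> y" "y \<le> b"
  shows "G y \<le> G a + (G b - G a) / (b - a) * (y - a)"
proof (cases "y = a \<or> y = b")
  case False
  with y have "a < y" "y < b"
    by auto
  from convex_on_slope_le(1)[OF G I this]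
  have "(G y - G a) / (y - a) \<le> (G b - G a) / (b - a)"
    by (simp only: slope_sym[of "G a"])
  with \<open>a < y\<close> show ?thesis
    by (simp add: pos_divide_le_eq)
qed auto

lemma convex_on_secant_le:
  fixes G :: "real \<Rightarrow> real"
  assumes G: "convex_on I G" and I: "a \<in> I" "b \<in> I" "y \<in> I" and "a < b"
    and outside: "y \<le> a \<or> b \<le> y"
  shows "G a + (G b - G a) / (b - a) * (y - a) \<le> G y"
proof -
  define s where "s = (G b - G a) / (b - a)"
  consider "y < a" | "b < y" | "y = a \<or> y = b"
    using outside by linarith
  then have "G a + s * (y - a) \<le> G y"
  proof cases
    case 1
    have "(G y - G a) / (y - a) \<le> (G y - G b) / (y - b)"
      using convex_on_slope_le(1)[OF G I(3) I(2) 1 \<open>a < b\<close>] .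
    also have "\<dots> \<le> s"
      using convex_on_slope_le(2)[OF G I(3) I(2) 1 \<open>a < b\<close>] unfolding s_def
      by (simp only: slope_sym[of "G a"])
    finally have "(G a - G y) / (a - y) \<le> s"
      by (simp only: slope_sym[of "G y" "G a"])
    with 1 have "G a - G y \<le> s * (a - y)"
      by (simp add: pos_divide_le_eq)
    then show ?thesis
      by (simp add: algebra_simps)
  next
    case 2
    have "s \<le> (G a - G y) / (a - y)"
      using convex_on_slope_le(1)[OF G I(1) I(3) \<open>a < b\<close> 2] unfolding s_def
      by (simp only: slope_sym[of "G a"])
    then have "s \<le> (G y - G a) / (y - a)"
      by (simp only: slope_sym[of "G a" "G y"])
    with 2 \<open>a < b\<close> show ?thesis
      by (simp add: pos_le_divide_eq)
  qed (use \<open>a < b\<close> in \<open>auto simp: s_def\<close>)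
  then show ?thesis
    unfolding s_def .
qed

lemma convex_transform_secant:
  fixes G T Q :: "real \<Rightarrow> real"
  assumes G: "convex_on I G"
    and T: "strict_mono_on {0<..<1} T" "\<And>u. 0 < u \<Longrightarrow> u < 1 \<Longrightarrow> T u \<in> I"
    and GT: "\<And>u. 0 < u \<Longrightarrow> u < 1 \<Longrightarrow> G (T u) = Q u"
    and Q: "mono_on {0<..<1} Q"
    and c: "0 < c1" "c1 < c2" "c2 < 1"
  obtains \<alpha> \<beta>
    where "\<And>u. c1 \<le> u \<Longrightarrow> u \<le> c2 \<Longrightarrow> Q u \<le> \<alpha> + \<beta> * T u"
      and "\<And>u. 0 < u \<Longrightarrow> u < 1 \<Longrightarrow> u < c1 \<or> c2 < u \<Longrightarrow> \<alpha> + \<beta> * T u \<le> Q u"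
      and "0 \<le> \<beta>"
proof -
  define a where "a = T c1"
  define b where "b = T c2"
  define s where "s = (G b - G a) / (b - a)"
  have I: "a \<in> I" "b \<in> I" and "a < b"
    unfolding a_def b_def using T c by (auto intro: strict_mono_onD)
  have "G a \<le> G b"
    unfolding a_def b_def using GT c mono_onD[OF Q, of c1 c2] by simp
  with \<open>a < b\<close> have "0 \<le> s"
    unfolding s_def by simp
  show ?thesis
  proof (rule that[of "G a - s * a" s])
    fix u assume u: "c1 \<le> u" "u \<le> c2"
    then have "a \<le> T u" "T u \<le> b"
      unfolding a_def b_def using c by (auto intro!: strict_mono_on_leD[OF T(1)])
    then have "G (T u) \<le> G a + s * (T u - a)"
      unfolding s_def by (rule convex_on_le_secant[OF G I])
    then show "Q u \<le> G a - s * a + s * T u"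
      using GT u c by (simp add: algebra_simps)
  next
    fix u assume u: "0 < u" "u < 1" "u < c1 \<or> c2 < u"
    then have "T u \<le> a \<or> b \<le> T u"
      unfolding a_def b_def using c by (auto intro!: strict_mono_on_leD[OF T(1)])
    then have "G a + s * (T u - a) \<le> G (T u)"
      unfolding s_def using u by (intro convex_on_secant_le[OF G I T(2) \<open>a < b\<close>])
    then show "G a - s * a + s * T u \<le> Q u"
      using GT u by (simp add: algebra_simps)
  qed (rule \<open>0 \<le> s\<close>)
qed

text \<open>Integrating \<open>(Q - \<alpha> - \<beta> T) (b - 1) \<le> 0\<close> against the probability density \<open>b\<close> gives
  \<open>\<integral> Q (b - 1) \<le> \<beta> \<integral> T (b - 1)\<close>.\<close>

lemma set_integral_mult_density_le:
  fixes Q T b :: "real \<Rightarrow> real"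
  assumes Q: "set_integrable lborel {0<..<1} Q" "set_integrable lborel {0<..<1} (\<lambda>u. Q u * b u)"
    and T: "set_integrable lborel {0<..<1} T" "set_integrable lborel {0<..<1} (\<lambda>u. T u * b u)"
    and b: "set_integrable lborel {0<..<1} b" "(LINT u:{0<..<1}|lborel. b u) = 1"
    and sign: "\<And>u. 0 < u \<Longrightarrow> u < 1 \<Longrightarrow> (Q u - \<alpha> - \<beta> * T u) * (b u - 1) \<le> 0"
    and "0 \<le> \<beta>"
    and T_le: "(LINT u:{0<..<1}|lborel. T u * b u) \<le> (LINT u:{0<..<1}|lborel. T u)"
  shows "(LINT u:{0<..<1}|lborel. Q u * b u) \<le> (LINT u:{0<..<1}|lborel. Q u)"
proof -
  have one: "set_integrable lborel {0<..<1::real} (\<lambda>_. 1::real)"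
    unfolding set_integrable_def by (simp add: integrable_real_indicator)
  have "(LINT u:{0<..<1::real}|lborel. 1::real) = 1"
    by (subst set_integral_const) auto
  note one = one this
  let ?R = "\<lambda>u. \<alpha> * (b u - 1) + \<beta> * (T u * b u - T u)"
  have b1: "set_integrable lborel {0<..<1} (\<lambda>u. \<alpha> * (b u - 1))"
    and Tb: "set_integrable lborel {0<..<1} (\<lambda>u. \<beta> * (T u * b u - T u))"
    using T b(1) one(1) by (auto intro!: set_integrable_mult_right set_integral_diff(1))
  have "(LINT u:{0<..<1}|lborel. Q u * b u) - (LINT u:{0<..<1}|lborel. Q u)
      = (LINT u:{0<..<1}|lborel. Q u * b u - Q u)"
    using Q by simp
  also have "\<dots> \<le> (LINT u:{0<..<1}|lborel. ?R u)"
  proof (rule set_integral_mono)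
    show "set_integrable lborel {0<..<1} (\<lambda>u. Q u * b u - Q u)"
      using Q by simp
    show "set_integrable lborel {0<..<1} ?R"
      using b1 Tb by simp
    fix u :: real assume "u \<in> {0<..<1}"
    then show "Q u * b u - Q u \<le> ?R u"
      using sign[of u] by (simp add: algebra_simps)
  qed
  also have "\<dots> = \<alpha> * ((LINT u:{0<..<1}|lborel. b u) - (LINT u:{0<..<1::real}|lborel. 1))
      + \<beta> * ((LINT u:{0<..<1}|lborel. T u * b u) - (LINT u:{0<..<1}|lborel. T u))"
    using b1 Tb T b(1) one(1) by (simp add: set_integral_add(2) set_integral_diff(2))
  also have "\<dots> \<le> 0"
    using b(2) one(2) T_le \<open>0 \<le> \<beta>\<close> by (simp add: mult_nonneg_nonpos)
  finally show ?thesis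
    by simp
qed

lemma set_integrable_mult_order_stat_density:
  assumes f: "set_integrable lborel {0<..<1} f"
  shows "set_integrable lborel {0<..<1} (\<lambda>u. f u * order_stat_density m k u)"
proof (rule set_integrable_bound)
  define K where "K = real m * real ((m - 1) choose (k - 1))"
  show "set_integrable lborel {0<..<1} (\<lambda>u. K * f u)"
    using f by simp
  show "set_borel_measurable lborel {0<..<1} (\<lambda>u. f u * order_stat_density m k u)"
    using f unfolding set_integrable_def set_borel_measurable_def
    by (auto dest!: borel_measurable_integrable simp: mult.assoc[symmetric])
  have "\<bar>f u\<bar> * order_stat_density m k u \<le> K * \<bar>f u\<bar>" if "0 < u" "u < 1" for u
    using order_stat_density_le[of u m k] that unfolding K_def
    by (simp add: mult.commute mult_left_mono)
  then show "AE u in lborel. u \<in> {0<..<1} \<longrightarrow>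
      norm (f u * order_stat_density m k u) \<le> norm (K * f u)"
    by (auto simp: abs_mult order_stat_density_nonneg K_def)
qed

lemma first_order_stat_mean_le:
  assumes "1 \<le> m" and Q: "mono_on {0<..<1} Q" "set_integrable lborel {0<..<1} Q"
  shows "(LINT u:{0<..<1}|lborel. Q u * order_stat_density m 1 u) \<le> (LINT u:{0<..<1}|lborel. Q u)"
proof (cases "m = 1")
  case False
  with assms obtain c where c: "0 < c" "c < 1"
    and above: "\<And>u. 0 \<le> u \<Longrightarrow> u \<le> c \<Longrightarrow> 1 \<le> order_stat_density m 1 u"
    and below: "\<And>u. c \<le> u \<Longrightarrow> u \<le> 1 \<Longrightarrow> order_stat_density m 1 u \<le> 1"
    using order_stat_density_1_crosses_1[of m] by auto
  have sign: "(Q u - Q c - 0 * 0) * (order_stat_density m 1 u - 1) \<le> 0" if "0 < u" "u < 1" for u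
  proof (cases "u \<le> c")
    case True
    then show ?thesis
      using mono_onD[OF Q(1), of u c] above[of u] that c by (simp add: mult_nonpos_nonneg)
  next
    case False
    then show ?thesis
      using mono_onD[OF Q(1), of c u] below[of u] that c by (simp add: mult_nonneg_nonpos)
  qed
  show ?thesis
    by (rule set_integral_mult_density_le[OF Q(2) set_integrable_mult_order_stat_density[OF Q(2)]
          _ _ set_integral_order_stat_density[OF order_refl assms(1)] sign])
      (simp_all add: set_integrable_def)
qed simp

lemma order_stat_mean_le_of_convex_transform:
  fixes G T Q :: "real \<Rightarrow> real"
  assumes j: "1 < j" "j < m"
    and G: "convex_on I G"
    and T: "strict_mono_on {0<..<1} T" "\<And>u. 0 < u \<Longrightarrow> u < 1 \<Longrightarrow> T u \<in> I"
    and GT: "\<And>u. 0 < u \<Longrightarrow> u < 1 \<Longrightarrow> G (T u) = Q u"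
    and Q: "mono_on {0<..<1} Q" "set_integrable lborel {0<..<1} Q"
    and T_int: "set_integrable lborel {0<..<1} T"
      "set_integrable lborel {0<..<1} (\<lambda>u. T u * order_stat_density m j u)"
    and T_le: "(LINT u:{0<..<1}|lborel. T u * order_stat_density m j u) \<le> (LINT u:{0<..<1}|lborel. T u)"
  shows "(LINT u:{0<..<1}|lborel. Q u * order_stat_density m j u) \<le> (LINT u:{0<..<1}|lborel. Q u)"
proof -
  obtain c1 c2 where c: "0 < c1" "c1 < c2" "c2 < 1"
    and above: "\<And>u. c1 \<le> u \<Longrightarrow> u \<le> c2 \<Longrightarrow> 1 \<le> order_stat_density m j u"
    and below: "\<And>u. 0 \<le> u \<Longrightarrow> u \<le> 1 \<Longrightarrow> u < c1 \<or> c2 < u \<Longrightarrow> order_stat_density m j u \<le> 1"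
    using order_stat_density_crosses_1_twice[OF j] by metis
  obtain \<alpha> \<beta>
    where Q_below: "\<And>u. c1 \<le> u \<Longrightarrow> u \<le> c2 \<Longrightarrow> Q u \<le> \<alpha> + \<beta> * T u"
      and Q_above: "\<And>u. 0 < u \<Longrightarrow> u < 1 \<Longrightarrow> u < c1 \<or> c2 < u \<Longrightarrow> \<alpha> + \<beta> * T u \<le> Q u"
      and "0 \<le> \<beta>"
    using convex_transform_secant[OF G T GT Q(1) c] by metis
  have sign: "(Q u - \<alpha> - \<beta> * T u) * (order_stat_density m j u - 1) \<le> 0" if "0 < u" "u < 1" for u
  proof (cases "c1 \<le> u \<and> u \<le> c2")
    case True
    then have "Q u - \<alpha> - \<beta> * T u \<le> 0" "0 \<le> order_stat_density m j u - 1"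
      using Q_below[of u] above[of u] by auto
    then show ?thesis
      by (rule mult_nonpos_nonneg)
  next
    case False
    then have "0 \<le> Q u - \<alpha> - \<beta> * T u" "order_stat_density m j u - 1 \<le> 0"
      using Q_above[of u] below[of u] that by auto
    then show ?thesis
      by (rule mult_nonneg_nonpos)
  qed
  have "1 \<le> j" "j \<le> m"
    using j by simp_all
  note density = set_integral_order_stat_density[OF this]
  show ?thesis
    by (rule set_integral_mult_density_le[OF Q(2) set_integrable_mult_order_stat_density[OF Q(2)]
          T_int density sign \<open>0 \<le> \<beta>\<close> T_le])
qed

lemma sum_inverse_eq_harm_diff:
  assumes "1 \<le> j" "j \<le> Suc m"
  shows "(\<Sum>i = j..m. 1 / real i) = harm m - harm (j - 1)"
proof -
  have "{1..m} = {1..j - 1} \<union> {j..m}"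
    using assms by auto
  then have "harm m = harm (j - 1) + (\<Sum>i = j..m. inverse (real i))"
    unfolding harm_def by (simp add: sum.union_disjoint)
  then show ?thesis
    by (simp add: inverse_eq_divide)
qed

lemma Digamma_diff_eq_sum_inverse_diff:
  assumes "1 \<le> j" "j \<le> m"
  shows "Digamma (real j) - Digamma (real m - real j + 1)
       = (\<Sum>i = m - j + 1..m. 1 / real i) - (\<Sum>i = j..m. 1 / real i)"
proof -
  have "real j = of_nat (Suc (j - 1))" "real m - real j + 1 = of_nat (Suc (m - j))"
    using assms by (simp_all add: of_nat_diff)
  then have "Digamma (real j) - Digamma (real m - real j + 1) = harm (j - 1) - harm (m - j)"
    by (simp only: Digamma_of_nat)
  also have "\<dots> = (harm m - harm (m - j)) - (harm m - harm (j - 1))"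
    by simp
  finally show ?thesis
    using assms by (simp add: sum_inverse_eq_harm_diff)
qed

lemma order_stat_mean_le_DD:
  assumes j: "1 < j" "j < m" and Q: "mono_on {0<..<1} Q" "set_integrable lborel {0<..<1} Q"
    and "convex_on {0<..<1} Q" and "real j / (real m + 1) \<le> 1/2"
  shows "(LINT u:{0<..<1}|lborel. Q u * order_stat_density m j u) \<le> (LINT u:{0<..<1}|lborel. Q u)"
proof (rule order_stat_mean_le_of_convex_transform[OF j \<open>convex_on {0<..<1} Q\<close>])
  have "1 \<le> j" "j \<le> m"
    using j by simp_all
  note uniform = set_integral_mult_order_stat_density_id[of 1 1, simplified]
    and order_stat = set_integral_mult_order_stat_density_id[OF this]
  show "set_integrable lborel {0<..<1} (\<lambda>u::real. u)"
    by (rule uniform(1))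
  show "set_integrable lborel {0<..<1} (\<lambda>u. u * order_stat_density m j u)"
    by (rule order_stat(1))
  show "(LINT u:{0<..<1}|lborel. u * order_stat_density m j u) \<le> (LINT u:{0<..<1}|lborel. u)"
  proof -
    have half: "(LINT u:{0<..<1}|lborel. u::real) = 1/2"
      using uniform(2) by simp
    show ?thesis
      unfolding half order_stat(2) using assms(6) .
  qed
qed (use Q in \<open>auto intro: strict_mono_onI\<close>)

lemma order_stat_mean_le_DLOR:
  assumes j: "1 < j" "j < m" and Q: "mono_on {0<..<1} Q" "set_integrable lborel {0<..<1} Q"
    and "convex_on UNIV (Q \<circ> logistic)" and "Digamma (real j) - Digamma (real m - real j + 1) \<le> 0"
  shows "(LINT u:{0<..<1}|lborel. Q u * order_stat_density m j u) \<le> (LINT u:{0<..<1}|lborel. Q u)"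
proof (rule order_stat_mean_le_of_convex_transform[OF j \<open>convex_on UNIV (Q \<circ> logistic)\<close>])
  let ?logit = "\<lambda>u::real. ln u - ln (1 - u)"
  have "1 \<le> j" "j \<le> m"
    using j by simp_all
  note neg_ln = set_integral_mult_order_stat_density_neg_ln[OF this]
    and neg_ln_1m = set_integral_mult_order_stat_density_neg_ln_1m[OF this]
    and neg_ln_uniform = set_integral_mult_order_stat_density_neg_ln[of 1 1, simplified]
    and neg_ln_1m_uniform = set_integral_mult_order_stat_density_neg_ln_1m[of 1 1, simplified]
  have logit: "?logit u = - ln (1 - u) - - ln u" for u
    by simp
  show "set_integrable lborel {0<..<1} ?logit"
    using neg_ln_uniform(1) neg_ln_1m_uniform(1) unfolding logit by (rule set_integral_diff(1)[rotated])
  show "set_integrable lborel {0<..<1} (\<lambda>u. ?logit u * order_stat_density m j u)"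
    using set_integral_diff(1)[OF neg_ln_1m(1) neg_ln(1)] by (simp add: algebra_simps)
  show "(LINT u:{0<..<1}|lborel. ?logit u * order_stat_density m j u) \<le> (LINT u:{0<..<1}|lborel. ?logit u)"
    using set_integral_diff(2)[OF neg_ln_1m(1) neg_ln(1)] set_integral_diff(2)[OF neg_ln_1m_uniform(1) neg_ln_uniform(1)]
      neg_ln(2) neg_ln_1m(2) neg_ln_uniform(2) neg_ln_1m_uniform(2) assms(6)
      Digamma_diff_eq_sum_inverse_diff[OF \<open>1 \<le> j\<close> \<open>j \<le> m\<close>]
    by (simp add: algebra_simps)
  show "strict_mono_on {0<..<1} ?logit"
    by (rule strict_mono_onI) (simp add: diff_strict_mono)
  show "(Q \<circ> logistic) (?logit u) = Q u" if "0 < u" "u < 1" for u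
  proof -
    have "exp (- ?logit u) = (1 - u) / u"
      using that by (simp add: exp_diff)
    then have "logistic (?logit u) = 1 / (1 + (1 - u) / u)"
      by (simp add: logistic_def)
    also have "\<dots> = u"
      using that by (simp add: field_simps)
    finally have "logistic (?logit u) = u" .
    then show ?thesis
      by simp
  qed
qed (use Q in auto)

lemma order_stat_mean_le_DHR:
  assumes j: "1 < j" "j < m" and Q: "mono_on {0<..<1} Q" "set_integrable lborel {0<..<1} Q"
    and "convex_on {0<..} (\<lambda>x. Q (1 - exp (- x)))" and "1 \<ge> (\<Sum>k = m - j + 1..m. 1 / real k)"
  shows "(LINT u:{0<..<1}|lborel. Q u * order_stat_density m j u) \<le> (LINT u:{0<..<1}|lborel. Q u)"
proof (rule order_stat_mean_le_of_convex_transform[OF j \<open>convex_on {0<..} (\<lambda>x. Q (1 - exp (- x)))\<close>])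
  have "1 \<le> j" "j \<le> m"
    using j by simp_all
  note order_stat = set_integral_mult_order_stat_density_neg_ln_1m[OF this]
    and uniform = set_integral_mult_order_stat_density_neg_ln_1m[of 1 1, simplified]
  show "set_integrable lborel {0<..<1} (\<lambda>u::real. - ln (1 - u))"
    by (rule uniform(1))
  show "set_integrable lborel {0<..<1} (\<lambda>u. - ln (1 - u) * order_stat_density m j u)"
    by (rule order_stat(1))
  show "(LINT u:{0<..<1}|lborel. - ln (1 - u) * order_stat_density m j u)
      \<le> (LINT u:{0<..<1}|lborel. - ln (1 - u::real))"
    using assms(6) uniform(2) order_stat(2) by simp
  show "strict_mono_on {0<..<1} (\<lambda>u::real. - ln (1 - u))"
    by (rule strict_mono_onI) simp
qed (use Q in auto)

lemma order_stat_mean_le_DRHR: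
  assumes j: "1 < j" "j < m" and Q: "mono_on {0<..<1} Q" "set_integrable lborel {0<..<1} Q"
    and "convex_on {..<0} (\<lambda>x. Q (exp x))" and "1 \<le> (\<Sum>k = j..m. 1 / real k)"
  shows "(LINT u:{0<..<1}|lborel. Q u * order_stat_density m j u) \<le> (LINT u:{0<..<1}|lborel. Q u)"
proof (rule order_stat_mean_le_of_convex_transform[OF j \<open>convex_on {..<0} (\<lambda>x. Q (exp x))\<close>])
  have "1 \<le> j" "j \<le> m"
    using j by simp_all
  note order_stat = set_integral_mult_order_stat_density_neg_ln[OF this]
    and uniform = set_integral_mult_order_stat_density_neg_ln[of 1 1, simplified]
  show "set_integrable lborel {0<..<1} (\<lambda>u::real. ln u)"
    using set_integrable_mult_right[OF uniform(1), of "-1"] by simp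
  show "set_integrable lborel {0<..<1} (\<lambda>u. ln u * order_stat_density m j u)"
    using set_integrable_mult_right[OF order_stat(1), of "-1"] by simp
  show "(LINT u:{0<..<1}|lborel. ln u * order_stat_density m j u) \<le> (LINT u:{0<..<1}|lborel. ln (u::real))"
    using set_integral_uminus[OF order_stat(1)] set_integral_uminus[OF uniform(1)] assms(6)
      uniform(2) order_stat(2)
    by simp
  show "strict_mono_on {0<..<1} (\<lambda>u::real. ln u)"
    by (rule strict_mono_onI) simp
qed (use Q in auto)

lemma maximum_order_stat_conditions_fail:
  assumes "2 \<le> m"
  shows "1/2 < real m / (real m + 1)" and "0 < Digamma (real m) - Digamma 1"
    and "1 < (\<Sum>k = 1..m. 1 / real k)" and "1 / real m < 1"
proof -
  show "1/2 < real m / (real m + 1)" "1 / real m < 1"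
    using assms by (simp_all add: field_simps)
  have "(\<Sum>k \<in> {1, 2}. 1 / real k) \<le> (\<Sum>k = 1..m. 1 / real k)"
    using assms by (intro sum_mono2) auto
  then show "1 < (\<Sum>k = 1..m. 1 / real k)"
    by simp
  moreover have "Digamma (real m) - Digamma 1 = (\<Sum>i = 1..m. 1 / real i) - 1 / real m"
    using Digamma_diff_eq_sum_inverse_diff[of m m] assms by simp
  moreover have "1 / real m < 1"
    using assms by simp
  ultimately show "0 < Digamma (real m) - Digamma 1"
    by linarith
qed

lemma order_stat_quantile_integral_le:
  fixes Q :: "real \<Rightarrow> real"
  assumes Q: "mono_on {0<..<1} Q" "set_integrable lborel {0<..<1} Q"
    and j: "1 \<le> j" "j \<le> m"
    and "(convex_on {0<..<1} Q \<and> 1/2 \<ge> real j / (real m + 1))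
       \<or> (convex_on UNIV (Q \<circ> logistic) \<and> Digamma (real j) - Digamma (real m - real j + 1) \<le> 0)
       \<or> (convex_on {0<..} (\<lambda>x. Q (1 - exp (- x))) \<and> 1 \<ge> (\<Sum>k = m - j + 1..m. 1 / real k))
       \<or> (convex_on {..<0} (\<lambda>x. Q (exp x)) \<and> 1 \<le> (\<Sum>k = j..m. 1 / real k))"
  shows "(LINT u:{0<..<1}|lborel. Q u * order_stat_density m j u) \<le> (LINT u:{0<..<1}|lborel. Q u)"
proof -
  consider "j = 1" | "1 < j" "j < m" | "1 < j" "j = m"
    using j by linarith
  then show ?thesis
  proof cases
    case 1
    then show ?thesis
      using first_order_stat_mean_le[OF _ Q] j by simp
  next
    case 2
    then show ?thesis
      using assms(5) order_stat_mean_le_DD[OF 2 Q] order_stat_mean_le_DLOR[OF 2 Q]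
        order_stat_mean_le_DHR[OF 2 Q] order_stat_mean_le_DRHR[OF 2 Q]
      by blast
  next
    case 3
    then show ?thesis
      using assms(5) maximum_order_stat_conditions_fail[of m] by auto
  qed
qed

theorem corollary11:
  fixes M :: "'a measure" and X :: "'a \<Rightarrow> real" and j m :: nat
  assumes "prob_space M"
    and "X \<in> borel_measurable M"
    and "integrable M X"
    and "1 \<le> j" and "j \<le> m"
    and "(convex_on {0<..<1} (quantile (cdf (distr M borel X)))
            \<and> 1/2 \<ge> real j / (real m + 1))
       \<or> (convex_on UNIV (quantile (cdf (distr M borel X)) \<circ> logistic)
            \<and> Digamma (real j) - Digamma (real m - real j + 1) \<le> 0)
       \<or> (convex_on {0<..} (\<lambda>x. quantile (cdf (distr M borel X)) (1 - exp (- x)))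
            \<and> 1 \<ge> (\<Sum>k = m - j + 1..m. 1 / real k))
       \<or> (convex_on {..<0} (\<lambda>x. quantile (cdf (distr M borel X)) (exp x))
            \<and> 1 \<le> (\<Sum>k = j..m. 1 / real k))"
  shows "integral\<^sup>L (PiM {..<m} (\<lambda>_. distr M borel X)) (order_stat m j)
           \<le> integral\<^sup>L M X"
proof -
  interpret prob_space M by fact
  let ?N = "distr M borel X"
  let ?Q = "quantile (cdf ?N)"
  have N: "real_distribution ?N"
    using assms(2) by simp
  have Q: "mono_on {0<..<1} ?Q" "set_integrable lborel {0<..<1} ?Q"
    using mono_on_quantile[OF N] set_integrable_quantile[OF N] assms(2,3)
    by (auto simp: integrable_distr_eq)
  have "integral\<^sup>L (PiM {..<m} (\<lambda>_. ?N)) (order_stat m j)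
      = (LINT u:{0<..<1}|lborel. ?Q u * order_stat_density m j u)"
    by (rule expectation_order_stat[OF N assms(4,5)])
  also have "\<dots> \<le> (LINT u:{0<..<1}|lborel. ?Q u)"
    by (rule order_stat_quantile_integral_le[OF Q assms(4-6)])
  also have "\<dots> = integral\<^sup>L M X"
    using assms(2) by (simp add: expectation_eq_set_integral_quantile[OF N, symmetric] integral_distr)
  finally show ?thesis .
qed

end
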